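(* Let $u\le v$ in $S_n$, let $I$ be a strong hypercube decomposition of $[u,v]$ with hypercube maps $\theta_x$, and let $\prec$ be a reflection order satisfying (E1) relative to $I$. Then every increasing path from $u$ to $v$ in the Bruhat graph ends with a sequence of the form $$\cdots\to x\to\theta_x(\{y_1\})\to\theta_x(\{y_1,y_2\})\to\cdots\to\theta_x(\{y_1,\dots,y_k\})$$ for some $x\in I$ and some $\{y_1,\dots,y_k\}\in\mathcal{A}_x$.
   Context: $S_n$ is the symmetric group with simple reflections $s_i=(i\ i{+}1)$, length $\ell$, and $T$ the set of transpositions. The Bruhat graph $\Gamma$ has vertex set $S_n$ and edges $w\xrightarrow{t}tw$ labelled $t$ whenever $t\in T$, $\ell(w)<\ell(tw)$; Bruhat order is reachability; $\Gamma(u,v)$ is the induced subgraph on $[u,v]$. A path is increasing if its edge labels are strictly increasing under $\prec$. A diamond is a subgraph of $\Gamma$ with four distinct vertices $x_1,\dots,x_4$ and edges $x_1\to x_2\to x_4$, $x_1\to x_3\to x_4$; $X\subset[u,v]$ is diamond-closed in $[u,v]$ if it contains the fourth vertex of any diamond in $[u,v]$ of which it contains three vertices. A reflection order is a total order $\prec$ on $T$ with, for all $a<b<c$, either $(a\,b)\prec(a\,c)\prec(b\,c)$ or $(b\,c)\prec(a\,c)\prec(a\,b)$. For an order ideal $I\subset[u,v]$ and $x\in I$, $\mathcal{Y}_x=\{y\in[u,v]\setminus I: x\to y\}$ and $\mathcal{A}_x$ is the set of Bruhat antichains contained in $\mathcal{Y}_x$, with $Y_1\to Y_2$ iff $Y_1\subset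 Y_2$, $|Y_2\setminus Y_1|=1$. A strong hypercube cluster at $x$ is a map $\theta_x:\mathcal{A}_x\to[u,v]$ with (HC1) $\theta_x(\varnothing)=x$; (HC2) $\theta_x(\{y\})=y$; (HC3) $Y_1\to Y_2$ implies $\theta_x(Y_1)\to\theta_x(Y_2)$ in $\Gamma$; (HC4) if $|Y|=|Y'|=|Y\cap Y'|+1$ and $\theta_x(Y\cap Y'),\theta_x(Y),\theta_x(Y'),w$ form a diamond in $\Gamma(u,v)$ with top $w$, then $Y\cup Y'$ is an antichain and $\theta_x(Y\cup Y')=w$. A strong hypercube decomposition of $[u,v]$ is an order ideal $I=[u,z]$ ($z\in[u,v]$) that is diamond-closed in $[u,v]$ and such that every $x\in I$ has a strong hypercube cluster relative to $I$. Condition (E1) relative to $I$: for each $x\in I$, if $x\xrightarrow{t_1}y_1$ and $x\xrightarrow{t_2}y_2$ with $y_1\in I$ and $y_2\in[u,v]\setminus I$, then $t_1\prec t_2$. *)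

theory Defs
  imports "HOL-Combinatorics.Permutations" "HOL-Combinatorics.Transposition"
begin

text \<open>Elements of S_n are permutations of {1..n} (functions nat => nat fixing
everything outside {1..n}). Products act as composition: (t w)(i) = t (w i).\<close>

definition Sn :: "nat \<Rightarrow> (nat \<Rightarrow> nat) set" where
  "Sn n = {p. p permutes {1..n}}"

definition len :: "nat \<Rightarrow> (nat \<Rightarrow> nat) \<Rightarrow> nat" where
  "len n w = card {(i, j). 1 \<le> i \<and> i < j \<and> j \<le> n \<and> w i > w j}"

text \<open>The set T of transpositions, (a b) encoded as the pair (a,b) with a < b.\<close>
definition Trans :: "nat \<Rightarrow> (nat \<times> nat) set" where
  "Trans n = {(a, b). 1 \<le> a \<and> a < b \<and> b \<le> n}"

definition refl_perm :: "nat \<times> nat \<Rightarrow> nat \<Rightarrow> nat" where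
  "refl_perm t = transpose (fst t) (snd t)"

definition bedge :: "nat \<Rightarrow> (nat \<Rightarrow> nat) \<Rightarrow> nat \<times> nat \<Rightarrow> (nat \<Rightarrow> nat) \<Rightarrow> bool" where
  "bedge n w t w' \<longleftrightarrow> w \<in> Sn n \<and> t \<in> Trans n \<and> w' = refl_perm t \<circ> w \<and> len n w < len n w'"

definition barrow :: "nat \<Rightarrow> (nat \<Rightarrow> nat) \<Rightarrow> (nat \<Rightarrow> nat) \<Rightarrow> bool" where
  "barrow n w w' \<longleftrightarrow> (\<exists>t. bedge n w t w')"

definition bruhat_le :: "nat \<Rightarrow> (nat \<Rightarrow> nat) \<Rightarrow> (nat \<Rightarrow> nat) \<Rightarrow> bool" where
  "bruhat_le n u w \<longleftrightarrow> u \<in> Sn n \<and> (barrow n)\<^sup>*\<^sup>* u w"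

definition bint :: "nat \<Rightarrow> (nat \<Rightarrow> nat) \<Rightarrow> (nat \<Rightarrow> nat) \<Rightarrow> (nat \<Rightarrow> nat) set" where
  "bint n u v = {w. bruhat_le n u w \<and> bruhat_le n w v}"

definition is_diamond :: "nat \<Rightarrow> (nat \<Rightarrow> nat) \<Rightarrow> (nat \<Rightarrow> nat) \<Rightarrow> (nat \<Rightarrow> nat) \<Rightarrow> (nat \<Rightarrow> nat) \<Rightarrow> bool" where
  "is_diamond n x1 x2 x3 x4 \<longleftrightarrow> distinct [x1, x2, x3, x4] \<and>
     barrow n x1 x2 \<and> barrow n x2 x4 \<and> barrow n x1 x3 \<and> barrow n x3 x4"

definition diamond_in :: "nat \<Rightarrow> (nat \<Rightarrow> nat) \<Rightarrow> (nat \<Rightarrow> nat) \<Rightarrow> (nat \<Rightarrow> nat) \<Rightarrow> (nat \<Rightarrow> nat) \<Rightarrow> (nat \<Rightarrow> nat) \<Rightarrow> (nat \<Rightarrow> nat) \<Rightarrow> bool" where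
  "diamond_in n u v x1 x2 x3 x4 \<longleftrightarrow> is_diamond n x1 x2 x3 x4 \<and> {x1, x2, x3, x4} \<subseteq> bint n u v"

definition diamond_closed :: "nat \<Rightarrow> (nat \<Rightarrow> nat) \<Rightarrow> (nat \<Rightarrow> nat) \<Rightarrow> (nat \<Rightarrow> nat) set \<Rightarrow> bool" where
  "diamond_closed n u v X \<longleftrightarrow> X \<subseteq> bint n u v \<and>
     (\<forall>x1 x2 x3 x4. diamond_in n u v x1 x2 x3 x4 \<longrightarrow> card ({x1, x2, x3, x4} \<inter> X) \<ge> 3
        \<longrightarrow> {x1, x2, x3, x4} \<subseteq> X)"

definition Yx :: "nat \<Rightarrow> (nat \<Rightarrow> nat) \<Rightarrow> (nat \<Rightarrow> nat) \<Rightarrow> (nat \<Rightarrow> nat) set \<Rightarrow> (nat \<Rightarrow> nat) \<Rightarrow> (nat \<Rightarrow> nat) set" where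
  "Yx n u v I x = {y \<in> bint n u v - I. barrow n x y}"

definition bantichain :: "nat \<Rightarrow> (nat \<Rightarrow> nat) set \<Rightarrow> bool" where
  "bantichain n A \<longleftrightarrow> (\<forall>a\<in>A. \<forall>b\<in>A. bruhat_le n a b \<longrightarrow> a = b)"

definition Ax :: "nat \<Rightarrow> (nat \<Rightarrow> nat) \<Rightarrow> (nat \<Rightarrow> nat) \<Rightarrow> (nat \<Rightarrow> nat) set \<Rightarrow> (nat \<Rightarrow> nat) \<Rightarrow> (nat \<Rightarrow> nat) set set" where
  "Ax n u v I x = {Y. Y \<subseteq> Yx n u v I x \<and> bantichain n Y}"

definition acover :: "'a set \<Rightarrow> 'a set \<Rightarrow> bool" where
  "acover Y1 Y2 \<longleftrightarrow> Y1 \<subseteq> Y2 \<and> card (Y2 - Y1) = 1"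

definition strong_hc_cluster :: "nat \<Rightarrow> (nat \<Rightarrow> nat) \<Rightarrow> (nat \<Rightarrow> nat) \<Rightarrow> (nat \<Rightarrow> nat) set \<Rightarrow> (nat \<Rightarrow> nat)
    \<Rightarrow> ((nat \<Rightarrow> nat) set \<Rightarrow> (nat \<Rightarrow> nat)) \<Rightarrow> bool" where
  "strong_hc_cluster n u v I x \<theta> \<longleftrightarrow>
     (\<forall>Y \<in> Ax n u v I x. \<theta> Y \<in> bint n u v) \<and>
     \<theta> {} = x \<and>
     (\<forall>y. {y} \<in> Ax n u v I x \<longrightarrow> \<theta> {y} = y) \<and>
     (\<forall>Y1 \<in> Ax n u v I x. \<forall>Y2 \<in> Ax n u v I x. acover Y1 Y2 \<longrightarrow> barrow n (\<theta> Y1) (\<theta> Y2)) \<and>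
     (\<forall>Y \<in> Ax n u v I x. \<forall>Y' \<in> Ax n u v I x. \<forall>w.
        card Y = card Y' \<and> card Y = card (Y \<inter> Y') + 1 \<and>
        diamond_in n u v (\<theta> (Y \<inter> Y')) (\<theta> Y) (\<theta> Y') w \<longrightarrow>
        bantichain n (Y \<union> Y') \<and> \<theta> (Y \<union> Y') = w)"

definition strong_hc_decomp :: "nat \<Rightarrow> (nat \<Rightarrow> nat) \<Rightarrow> (nat \<Rightarrow> nat) \<Rightarrow> (nat \<Rightarrow> nat) set
    \<Rightarrow> ((nat \<Rightarrow> nat) \<Rightarrow> (nat \<Rightarrow> nat) set \<Rightarrow> (nat \<Rightarrow> nat)) \<Rightarrow> bool" where
  "strong_hc_decomp n u v I \<theta> \<longleftrightarrow>
     (\<exists>z \<in> bint n u v. I = bint n u z) \<and> diamond_closed n u v I \<and>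
     (\<forall>x \<in> I. strong_hc_cluster n u v I x (\<theta> x))"

definition reflection_order :: "nat \<Rightarrow> (nat \<times> nat \<Rightarrow> nat \<times> nat \<Rightarrow> bool) \<Rightarrow> bool" where
  "reflection_order n prec \<longleftrightarrow>
     (\<forall>t \<in> Trans n. \<not> prec t t) \<and>
     (\<forall>s \<in> Trans n. \<forall>t \<in> Trans n. \<forall>r \<in> Trans n. prec s t \<longrightarrow> prec t r \<longrightarrow> prec s r) \<and>
     (\<forall>s \<in> Trans n. \<forall>t \<in> Trans n. s \<noteq> t \<longrightarrow> prec s t \<or> prec t s) \<and>
     (\<forall>a b c. 1 \<le> a \<and> a < b \<and> b < c \<and> c \<le> n \<longrightarrow>
        (prec (a, b) (a, c) \<and> prec (a, c) (b, c)) \<or> (prec (b, c) (a, c) \<and> prec (a, c) (a, b)))"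

definition E1 :: "nat \<Rightarrow> (nat \<Rightarrow> nat) \<Rightarrow> (nat \<Rightarrow> nat) \<Rightarrow> (nat \<Rightarrow> nat) set \<Rightarrow> (nat \<times> nat \<Rightarrow> nat \<times> nat \<Rightarrow> bool) \<Rightarrow> bool" where
  "E1 n u v I prec \<longleftrightarrow>
     (\<forall>x \<in> I. \<forall>t1 y1 t2 y2. bedge n x t1 y1 \<and> bedge n x t2 y2 \<and> y1 \<in> I \<and> y2 \<in> bint n u v - I
        \<longrightarrow> prec t1 t2)"

definition increasing_path :: "nat \<Rightarrow> (nat \<times> nat \<Rightarrow> nat \<times> nat \<Rightarrow> bool) \<Rightarrow> (nat \<Rightarrow> nat) \<Rightarrow> (nat \<Rightarrow> nat)
    \<Rightarrow> (nat \<Rightarrow> nat) list \<Rightarrow> (nat \<times> nat) list \<Rightarrow> bool" where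
  "increasing_path n prec u v xs ts \<longleftrightarrow>
     xs \<noteq> [] \<and> hd xs = u \<and> last xs = v \<and> length xs = length ts + 1 \<and>
     (\<forall>i < length ts. bedge n (xs ! i) (ts ! i) (xs ! Suc i)) \<and>
     sorted_wrt prec ts"

end

theory Submission
  imports Defs
begin

(* Let x be the last vertex of the path in the ideal I; after x the path stays outside I and its
   labels increase. Walking along it, each vertex is theta_x of an antichain that grows by one
   element per step. For the step, an increasing two-edge path p -> q -> z can be re-routed as
   p -> z' -> z with z' <> q and a larger first label: a reflection order is lexicographic or
   antilexicographic on the transpositions of every triple a < b < c. By (E1) and since I is an order
   ideal, z' lies outside I, so by induction z' is theta_x of an antichain as well, and (HC4)
   applied to the diamond through q and z' identifies z. *)

section \<open>Length and the edges of the Bruhat graph\<close>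

definition inversions :: "nat \<Rightarrow> (nat \<Rightarrow> nat) \<Rightarrow> (nat \<times> nat) set" where
  "inversions n w = {(i, j). 1 \<le> i \<and> i < j \<and> j \<le> n \<and> w i > w j}"

lemma finite_inversions: "finite (inversions n w)"
  by (rule finite_subset[of _ "{1..n} \<times> {1..n}"]) (auto simp: inversions_def)

lemma len_less_comp_transpose:
  assumes "1 \<le> i" "i < j" "j \<le> n" "w i < w j"
  shows "len n w < len n (w \<circ> transpose i j)"
proof -
  define s where "s = transpose i j"
  define \<phi> where "\<phi> = (\<lambda>(p::nat, q::nat). if s p < s q then (s p, s q) else (p, q))"
  have "\<phi> ` inversions n w \<subseteq> inversions n (w \<circ> s) - {(i, j)}"
    using assms by (auto simp: \<phi>_def s_def inversions_def transpose_def split: if_splits)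
  moreover have "inj_on \<phi> (inversions n w)"
    using assms by (auto simp: inj_on_def \<phi>_def s_def inversions_def transpose_def split: if_splits)
  moreover have "(i, j) \<in> inversions n (w \<circ> s)"
    using assms by (auto simp: inversions_def s_def)
  ultimately have "card (inversions n w) < card (inversions n (w \<circ> s))"
    by (metis card_Diff1_less card_image card_mono finite_Diff finite_inversions order_le_less_trans)
  then show ?thesis
    by (simp add: len_def inversions_def s_def)
qed

text \<open>\<^term>\<open>ascent (inv x) (a, b)\<close>: the value \<open>a\<close> stands to the left of \<open>b\<close> in \<open>x\<close>.\<close>
definition ascent :: "(nat \<Rightarrow> nat) \<Rightarrow> nat \<times> nat \<Rightarrow> bool" where
  "ascent P t \<longleftrightarrow> P (fst t) < P (snd t)"

lemma Sn_refl_perm_comp: "x \<in> Sn n \<Longrightarrow> t \<in> Trans n \<Longrightarrow> refl_perm t \<circ> x \<in> Sn n"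
  unfolding Sn_def Trans_def refl_perm_def by (auto intro!: permutes_compose permutes_swap_id)

lemma inv_refl_perm_comp: "x \<in> Sn n \<Longrightarrow> inv (refl_perm t \<circ> x) = inv x \<circ> refl_perm t"
  by (simp add: Sn_def refl_perm_def o_inv_distrib permutes_bij)

lemma len_less_transpose_comp_iff:
  assumes x: "x \<in> Sn n" and ab: "(a, b) \<in> Trans n"
  shows "len n x < len n (transpose a b \<circ> x) \<longleftrightarrow> inv x a < inv x b"
proof -
  have xp: "x permutes {1..n}" using x by (simp add: Sn_def)
  define p q where "p = inv x a" and "q = inv x b"
  have pq: "p \<in> {1..n}" "q \<in> {1..n}" "x p = a" "x q = b" "a < b"
    using ab xp permutes_inv[OF xp] permutes_in_image permutes_inverses(1)
    by (fastforce simp: p_def q_def Trans_def)+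
  have eq: "transpose a b \<circ> x = x \<circ> transpose p q"
    unfolding p_def q_def by (rule transpose_comp_eq[OF permutes_bij[OF xp]])
  show ?thesis
  proof (cases "p < q")
    case True
    then show ?thesis using len_less_comp_transpose[of p q n x] pq eq by (simp add: p_def q_def)
  next
    case False
    then have "q < p" using pq by (metis linorder_neqE_nat order_less_irrefl)
    moreover have "(x \<circ> transpose p q) \<circ> transpose q p = x"
      by (simp add: comp_assoc transpose_commute)
    ultimately have "len n (x \<circ> transpose p q) < len n x"
      using len_less_comp_transpose[of q p n "x \<circ> transpose p q"] pq by simp
    then show ?thesis using False eq by (simp add: p_def q_def)
  qed
qed

lemma bedge_iff:
  "bedge n x t y \<longleftrightarrow> x \<in> Sn n \<and> t \<in> Trans n \<and> y = refl_perm t \<circ> x \<and> ascent (inv x) t"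
  by (cases t) (auto simp: bedge_def ascent_def refl_perm_def len_less_transpose_comp_iff)

section \<open>Exchanging two increasing edges\<close>

text \<open>The product \<open>t2 t1\<close> is a 3-cycle of the triple and equals \<open>t4 t3\<close> for exactly three pairs of
  transpositions of the triple; in each case one of the two pairs with \<open>t3 \<noteq> t1\<close> has ascending
  labels and \<open>t1 \<prec> t3\<close>.\<close>
lemma ascent_exchange_in_triple:
  fixes P :: "nat \<Rightarrow> nat" and \<alpha> \<beta> \<gamma> :: nat
  defines "T \<equiv> {(\<alpha>, \<beta>), (\<alpha>, \<gamma>), (\<beta>, \<gamma>)}"
  assumes "\<alpha> < \<beta>" "\<beta> < \<gamma>" and inj: "inj_on P {\<alpha>, \<beta>, \<gamma>}"
    and t12: "t1 \<in> T" "t2 \<in> T" "ascent P t1" "ascent (P \<circ> refl_perm t1) t2" "prec t1 t2"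
    and asym: "\<forall>s\<in>T. \<forall>t\<in>T. prec s t \<longrightarrow> \<not> prec t s"
    and ord: "(prec (\<alpha>, \<beta>) (\<alpha>, \<gamma>) \<and> prec (\<alpha>, \<gamma>) (\<beta>, \<gamma>) \<and> prec (\<alpha>, \<beta>) (\<beta>, \<gamma>)) \<or>
      (prec (\<beta>, \<gamma>) (\<alpha>, \<gamma>) \<and> prec (\<alpha>, \<gamma>) (\<alpha>, \<beta>) \<and> prec (\<beta>, \<gamma>) (\<alpha>, \<beta>))"
  shows "\<exists>t3\<in>T. \<exists>t4\<in>T. ascent P t3 \<and> ascent (P \<circ> refl_perm t3) t4 \<and>
    refl_perm t4 \<circ> refl_perm t3 = refl_perm t2 \<circ> refl_perm t1 \<and> prec t1 t3"
proof -
  have neq: "\<alpha> \<noteq> \<beta>" "\<alpha> \<noteq> \<gamma>" "\<beta> \<noteq> \<gamma>" "\<beta> \<noteq> \<alpha>" "\<gamma> \<noteq> \<alpha>" "\<gamma> \<noteq> \<beta>"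
    and Pneq: "P \<alpha> \<noteq> P \<beta>" "P \<alpha> \<noteq> P \<gamma>" "P \<beta> \<noteq> P \<gamma>"
    using assms(2,3) inj by (auto simp: inj_on_def)
  note simps = T_def ascent_def refl_perm_def fun_eq_iff transpose_def neq
  consider "t1 = (\<alpha>, \<beta>)" "t2 = (\<alpha>, \<gamma>)" "prec (\<alpha>, \<beta>) (\<beta>, \<gamma>)"
    | "t1 = (\<alpha>, \<beta>)" "t2 = (\<beta>, \<gamma>)" "prec (\<alpha>, \<beta>) (\<alpha>, \<gamma>)"
    | "t1 = (\<alpha>, \<gamma>)" "t2 = (\<beta>, \<gamma>)" "prec (\<alpha>, \<gamma>) (\<beta>, \<gamma>)"
    | "t1 = (\<beta>, \<gamma>)" "t2 = (\<alpha>, \<gamma>)" "prec (\<beta>, \<gamma>) (\<alpha>, \<beta>)"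
    | "t1 = (\<beta>, \<gamma>)" "t2 = (\<alpha>, \<beta>)" "prec (\<beta>, \<gamma>) (\<alpha>, \<gamma>)"
    | "t1 = (\<alpha>, \<gamma>)" "t2 = (\<alpha>, \<beta>)" "prec (\<alpha>, \<gamma>) (\<alpha>, \<beta>)"
    using t12(1,2,5) asym ord by (simp add: T_def) (metis neq(1-3) prod.inject)
  then show ?thesis
  proof cases
    case 1
    show ?thesis
      by (rule bexI[of _ "(\<beta>, \<gamma>)"], rule bexI[of _ "(\<alpha>, \<beta>)"])
        (use 1 t12 Pneq in \<open>auto simp: simps\<close>)
  next
    case 2
    show ?thesis
    proof (cases "P \<beta> < P \<gamma>")
      case True
      show ?thesis
        by (rule bexI[of _ "(\<beta>, \<gamma>)"], rule bexI[of _ "(\<alpha>, \<gamma>)"])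
        (use True 2 t12 Pneq in \<open>auto simp: simps\<close>)
    next
      case False
      show ?thesis
        by (rule bexI[of _ "(\<alpha>, \<gamma>)"], rule bexI[of _ "(\<alpha>, \<beta>)"])
        (use False 2 t12 Pneq in \<open>auto simp: simps\<close>)
    qed
  next
    case 3
    show ?thesis
      by (rule bexI[of _ "(\<beta>, \<gamma>)"], rule bexI[of _ "(\<alpha>, \<beta>)"])
        (use 3 t12 Pneq in \<open>auto simp: simps\<close>)
  next
    case 4
    show ?thesis
      by (rule bexI[of _ "(\<alpha>, \<beta>)"], rule bexI[of _ "(\<beta>, \<gamma>)"])
        (use 4 t12 Pneq in \<open>auto simp: simps\<close>)
  next
    case 5
    show ?thesis
    proof (cases "P \<alpha> < P \<beta>")
      case True
      show ?thesis
        by (rule bexI[of _ "(\<alpha>, \<beta>)"], rule bexI[of _ "(\<alpha>, \<gamma>)"])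
        (use True 5 t12 Pneq in \<open>auto simp: simps\<close>)
    next
      case False
      show ?thesis
        by (rule bexI[of _ "(\<alpha>, \<gamma>)"], rule bexI[of _ "(\<beta>, \<gamma>)"])
        (use False 5 t12 Pneq in \<open>auto simp: simps\<close>)
    qed
  next
    case 6
    show ?thesis
      by (rule bexI[of _ "(\<alpha>, \<beta>)"], rule bexI[of _ "(\<beta>, \<gamma>)"])
        (use 6 t12 Pneq in \<open>auto simp: simps\<close>)
  qed
qed

lemma Trans_pairs_in_triple:
  assumes "(a, b) \<in> Trans n" "(c, d) \<in> Trans n" "(a, b) \<noteq> (c, d)" "{a, b} \<inter> {c, d} \<noteq> {}"
  obtains \<alpha> \<beta> \<gamma> where "1 \<le> \<alpha>" "\<alpha> < \<beta>" "\<beta> < \<gamma>" "\<gamma> \<le> n"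
    "{(a, b), (c, d)} \<subseteq> {(\<alpha>, \<beta>), (\<alpha>, \<gamma>), (\<beta>, \<gamma>)}"
proof -
  have h: "1 \<le> a" "a < b" "b \<le> n" "1 \<le> c" "c < d" "d \<le> n" using assms(1,2) by (auto simp: Trans_def)
  consider "c = a" "b < d" | "c = a" "d < b" | "d = a" | "c = b" | "d = b" "a < c" | "d = b" "c < a"
    using assms(3,4) h by fastforce
  then show ?thesis
  proof cases
    case 1 then show ?thesis using h by (intro that[of a b d]) auto
  next
    case 2 then show ?thesis using h by (intro that[of a d b]) auto
  next
    case 3 then show ?thesis using h by (intro that[of c a b]) auto
  next
    case 4 then show ?thesis using h by (intro that[of a b d]) auto
  next
    case 5 then show ?thesis using h by (intro that[of a c b]) auto
  next
    case 6 then show ?thesis using h by (intro that[of c a b]) auto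
  qed
qed

lemma reflection_order_asym:
  "reflection_order n prec \<Longrightarrow> s \<in> Trans n \<Longrightarrow> t \<in> Trans n \<Longrightarrow> prec s t \<Longrightarrow> \<not> prec t s"
  unfolding reflection_order_def by blast

lemma reflection_order_triple:
  assumes "reflection_order n prec" "1 \<le> \<alpha>" "\<alpha> < \<beta>" "\<beta> < \<gamma>" "\<gamma> \<le> n"
  shows "(prec (\<alpha>, \<beta>) (\<alpha>, \<gamma>) \<and> prec (\<alpha>, \<gamma>) (\<beta>, \<gamma>) \<and> prec (\<alpha>, \<beta>) (\<beta>, \<gamma>)) \<or>
    (prec (\<beta>, \<gamma>) (\<alpha>, \<gamma>) \<and> prec (\<alpha>, \<gamma>) (\<alpha>, \<beta>) \<and> prec (\<beta>, \<gamma>) (\<alpha>, \<beta>))"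
proof -
  have "(\<alpha>, \<beta>) \<in> Trans n" "(\<alpha>, \<gamma>) \<in> Trans n" "(\<beta>, \<gamma>) \<in> Trans n"
    using assms(2-) by (auto simp: Trans_def)
  then show ?thesis using assms(1-5) unfolding reflection_order_def by meson
qed

lemma ascent_exchange:
  assumes RO: "reflection_order n prec" and inj: "inj_on P {1..n}"
    and t12: "t1 \<in> Trans n" "t2 \<in> Trans n" "ascent P t1" "ascent (P \<circ> refl_perm t1) t2" "prec t1 t2"
  shows "\<exists>t3\<in>Trans n. \<exists>t4\<in>Trans n. ascent P t3 \<and> ascent (P \<circ> refl_perm t3) t4 \<and>
    refl_perm t4 \<circ> refl_perm t3 = refl_perm t2 \<circ> refl_perm t1 \<and> prec t1 t3"
proof -
  obtain a b c d where t: "t1 = (a, b)" "t2 = (c, d)" by (cases t1, cases t2)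
  show ?thesis
  proof (cases "{a, b} \<inter> {c, d} = {}")
    case True
    then have "ascent P t2" "ascent (P \<circ> refl_perm t2) t1"
        "refl_perm t1 \<circ> refl_perm t2 = refl_perm t2 \<circ> refl_perm t1"
      using t12(3,4) by (auto simp: t ascent_def refl_perm_def transpose_def fun_eq_iff)
    then show ?thesis using t12 by blast
  next
    case False
    have "t1 \<noteq> t2" using reflection_order_asym[OF RO t12(1,2,5)] t12(5) by auto
    obtain \<alpha> \<beta> \<gamma> where abc: "1 \<le> \<alpha>" "\<alpha> < \<beta>" "\<beta> < \<gamma>" "\<gamma> \<le> n"
      and sub: "{(a, b), (c, d)} \<subseteq> {(\<alpha>, \<beta>), (\<alpha>, \<gamma>), (\<beta>, \<gamma>)}"
      by (rule Trans_pairs_in_triple[of a b n c d])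
        (use t12(1,2) False \<open>t1 \<noteq> t2\<close> in \<open>simp_all add: t\<close>)
    let ?T = "{(\<alpha>, \<beta>), (\<alpha>, \<gamma>), (\<beta>, \<gamma>)}"
    have T: "?T \<subseteq> Trans n" using abc by (auto simp: Trans_def)
    have inj3: "inj_on P {\<alpha>, \<beta>, \<gamma>}" by (rule inj_on_subset[OF inj])
        (use abc in auto)
    have t12T: "t1 \<in> ?T" "t2 \<in> ?T" using sub by (simp_all add: t)
    have asym: "\<forall>s\<in>?T. \<forall>t\<in>?T. prec s t \<longrightarrow> \<not> prec t s"
      using T reflection_order_asym[OF RO] by blast
    have "\<exists>t3\<in>?T. \<exists>t4\<in>?T. ascent P t3 \<and> ascent (P \<circ> refl_perm t3) t4 \<and>
        refl_perm t4 \<circ> refl_perm t3 = refl_perm t2 \<circ> refl_perm t1 \<and> prec t1 t3"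
      by (rule ascent_exchange_in_triple[OF abc(2,3) inj3 t12T t12(3-5) asym reflection_order_triple[OF RO abc]])
    then show ?thesis using T by (meson subsetD)
  qed
qed

lemma inj_on_refl_perm: "inj_on refl_perm (Trans n)"
proof (rule inj_onI)
  fix s t assume "s \<in> Trans n" "t \<in> Trans n" and eq: "refl_perm s = refl_perm t"
  have "refl_perm s (fst s) = refl_perm t (fst s)" "refl_perm s (snd s) = refl_perm t (snd s)"
    using eq by simp_all
  with \<open>s \<in> Trans n\<close> \<open>t \<in> Trans n\<close> show "s = t"
    by (cases s; cases t) (auto simp: Trans_def refl_perm_def transpose_def split: if_splits)
qed

lemma bedge_exchange:
  assumes RO: "reflection_order n prec" and e1: "bedge n x t1 y" and e2: "bedge n y t2 w"
    and "prec t1 t2"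
  shows "\<exists>t3 y'. bedge n x t3 y' \<and> barrow n y' w \<and> y' \<noteq> y \<and> prec t1 t3"
proof -
  have x: "x \<in> Sn n" and t12: "t1 \<in> Trans n" "t2 \<in> Trans n" and y: "y = refl_perm t1 \<circ> x"
    and w: "w = refl_perm t2 \<circ> y" and asc: "ascent (inv x) t1" "ascent (inv x \<circ> refl_perm t1) t2"
    using e1 e2 inv_refl_perm_comp[of x n t1] by (auto simp: bedge_iff)
  have "inj_on (inv x) {1..n}"
    using x permutes_inj_on[OF permutes_inv] unfolding Sn_def by blast
  then obtain t3 t4 where t34: "t3 \<in> Trans n" "t4 \<in> Trans n"
    "ascent (inv x) t3" "ascent (inv x \<circ> refl_perm t3) t4"
    "refl_perm t4 \<circ> refl_perm t3 = refl_perm t2 \<circ> refl_perm t1" "prec t1 t3"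
    using ascent_exchange[OF RO _ t12 asc \<open>prec t1 t2\<close>] by blast
  define y' where "y' = refl_perm t3 \<circ> x"
  have w': "w = refl_perm t4 \<circ> y'"
    using t34(5) unfolding w y y'_def by (metis comp_assoc)
  have "bedge n x t3 y'" using x t34 by (simp add: bedge_iff y'_def)
  moreover have "bedge n y' t4 w"
    unfolding w' using t34 Sn_refl_perm_comp[OF x t34(1)] by (simp add: bedge_iff inv_refl_perm_comp[OF x] y'_def)
  moreover have "y' \<noteq> y"
  proof
    assume "y' = y"
    moreover have "x \<circ> inv x = id" using x by (simp add: Sn_def permutes_surj[THEN surj_iff[THEN iffD1]])
    ultimately have "refl_perm t3 = refl_perm t1" unfolding y'_def y by (metis comp_assoc comp_id)
    then have "t3 = t1" using inj_on_refl_perm t12(1) t34(1) by (metis inj_on_eq_iff)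
    then show False using reflection_order_asym[OF RO] t12(1) t34(6) by blast
  qed
  ultimately show ?thesis using t34(6) unfolding barrow_def by blast
qed

section \<open>Bruhat order and labelled paths\<close>

lemma barrowI: "bedge n a t b \<Longrightarrow> barrow n a b"
  unfolding barrow_def by blast

lemma barrow_len_less: "barrow n a b \<Longrightarrow> len n a < len n b"
  unfolding barrow_def bedge_def by auto

lemma barrow_Sn: "barrow n a b \<Longrightarrow> a \<in> Sn n \<and> b \<in> Sn n"
  unfolding barrow_def bedge_def by (auto intro: Sn_refl_perm_comp)

lemma bruhat_le_trans: "bruhat_le n a b \<Longrightarrow> bruhat_le n b c \<Longrightarrow> bruhat_le n a c"
  unfolding bruhat_le_def by auto

lemma bruhat_le_if_barrow: "barrow n a b \<Longrightarrow> bruhat_le n a b"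
  unfolding bruhat_le_def using barrow_Sn by blast

lemma bruhat_le_Sn: "bruhat_le n a b \<Longrightarrow> a \<in> Sn n \<and> b \<in> Sn n"
proof -
  have "(barrow n)\<^sup>*\<^sup>* a b \<Longrightarrow> a \<in> Sn n \<Longrightarrow> b \<in> Sn n"
    by (induction rule: rtranclp_induct) (auto dest: barrow_Sn)
  then show "bruhat_le n a b \<Longrightarrow> a \<in> Sn n \<and> b \<in> Sn n" unfolding bruhat_le_def by blast
qed

lemma bruhat_le_refl: "a \<in> Sn n \<Longrightarrow> bruhat_le n a a"
  unfolding bruhat_le_def by simp

lemma diamond_inI:
  assumes "barrow n a b" "barrow n b d" "barrow n a c" "barrow n c d" "b \<noteq> c"
    and "{a, b, c, d} \<subseteq> bint n u v"
  shows "diamond_in n u v a b c d"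
  using assms barrow_len_less[OF assms(1)] barrow_len_less[OF assms(2)]
    barrow_len_less[OF assms(3)] barrow_len_less[OF assms(4)]
  unfolding diamond_in_def is_diamond_def by auto

definition labelled_path :: "nat \<Rightarrow> (nat \<Rightarrow> nat) list \<Rightarrow> (nat \<times> nat) list \<Rightarrow> bool" where
  "labelled_path n ps ls \<longleftrightarrow> length ps = Suc (length ls) \<and>
     (\<forall>i < length ls. bedge n (ps ! i) (ls ! i) (ps ! Suc i))"

lemma increasing_path_iff:
  "increasing_path n prec u v xs ts \<longleftrightarrow>
     labelled_path n xs ts \<and> sorted_wrt prec ts \<and> hd xs = u \<and> last xs = v"
  unfolding increasing_path_def labelled_path_def by auto

lemma labelled_path_snoc_iff:
  assumes "ps \<noteq> []"
  shows "labelled_path n (ps @ [z]) ls \<longleftrightarrow>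
    (\<exists>ls0 t. ls = ls0 @ [t] \<and> labelled_path n ps ls0 \<and> bedge n (last ps) t z)"
proof
  assume path: "labelled_path n (ps @ [z]) ls"
  then have "ls \<noteq> []" using assms unfolding labelled_path_def by auto
  then obtain ls0 t where ls: "ls = ls0 @ [t]" by (cases ls rule: rev_cases) auto
  then have len: "length ps = Suc (length ls0)" using path unfolding labelled_path_def by simp
  have edges: "\<forall>i < length ls. bedge n ((ps @ [z]) ! i) (ls ! i) ((ps @ [z]) ! Suc i)"
    using path unfolding labelled_path_def by simp
  have "bedge n (ps ! i) (ls0 ! i) (ps ! Suc i)" if "i < length ls0" for i
    using edges[rule_format, of i] that len by (simp add: ls nth_append)
  moreover have "bedge n (last ps) t z"
    using edges[rule_format, of "length ls0"] len assms by (simp add: ls nth_append last_conv_nth)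
  ultimately show "\<exists>ls0 t. ls = ls0 @ [t] \<and> labelled_path n ps ls0 \<and> bedge n (last ps) t z"
    using ls len unfolding labelled_path_def by blast
next
  assume "\<exists>ls0 t. ls = ls0 @ [t] \<and> labelled_path n ps ls0 \<and> bedge n (last ps) t z"
  then show "labelled_path n (ps @ [z]) ls"
    using assms unfolding labelled_path_def
    by (auto simp: nth_append last_conv_nth less_Suc_eq)
qed

lemma labelled_path_drop:
  assumes "labelled_path n (pre @ qs) ls" "qs \<noteq> []"
  shows "labelled_path n qs (drop (length pre) ls)"
proof -
  have len: "length pre + length qs = Suc (length ls)"
    and edges: "\<forall>i < length ls. bedge n ((pre @ qs) ! i) (ls ! i) ((pre @ qs) ! Suc i)"
    using assms(1) unfolding labelled_path_def by simp_all
  have "bedge n (qs ! i) (ls ! (length pre + i)) (qs ! Suc i)" if "i < length ls - length pre" for i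
    using edges[rule_format, of "length pre + i"] that by (simp add: nth_append)
  moreover have "length qs = Suc (length ls - length pre)" using len assms(2) by (cases qs) auto
  ultimately show ?thesis unfolding labelled_path_def by simp
qed

lemma labelled_path_labels_Trans: "labelled_path n ps ls \<Longrightarrow> set ls \<subseteq> Trans n"
  unfolding labelled_path_def bedge_def by (metis in_set_conv_nth subsetI)

lemma labelled_path_subset_bint:
  "labelled_path n ps ls \<Longrightarrow> hd ps \<in> Sn n \<Longrightarrow> set ps \<subseteq> bint n (hd ps) (last ps)"
proof (induction ps arbitrary: ls rule: rev_induct)
  case Nil
  then show ?case by simp
next
  case (snoc z ps)
  show ?case
  proof (cases "ps = []")
    case True
    then show ?thesis using snoc.prems by (simp add: bint_def bruhat_le_refl)
  next
    case False
    then obtain ls0 t where "labelled_path n ps ls0" and "bedge n (last ps) t z"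
      using snoc.prems(1) labelled_path_snoc_iff by blast
    moreover have "hd ps \<in> Sn n" using snoc.prems(2) False by simp
    ultimately have IH: "set ps \<subseteq> bint n (hd ps) (last ps)"
      and "bruhat_le n (last ps) z" using snoc.IH by (auto intro: bruhat_le_if_barrow barrowI)
    moreover have "bruhat_le n (hd ps) (last ps)"
      using IH last_in_set[OF False] unfolding bint_def by blast
    ultimately show ?thesis using False bruhat_le_Sn bruhat_le_refl
      unfolding bint_def by (auto intro: bruhat_le_trans)
  qed
qed

section \<open>Walks through a hypercube cluster\<close>

definition cluster_walk :: "('a set \<Rightarrow> 'a) \<Rightarrow> 'a list \<Rightarrow> 'a list" where
  "cluster_walk f ys = map (\<lambda>j. f (set (take j ys))) [0..<Suc (length ys)]"

lemma cluster_walk_not_Nil: "cluster_walk f ys \<noteq> []"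
  by (simp add: cluster_walk_def)

lemma cluster_walk_Nil: "cluster_walk f [] = [f {}]"
  by (simp add: cluster_walk_def)

lemma cluster_walk_snoc: "cluster_walk f (ys @ [y]) = cluster_walk f ys @ [f (insert y (set ys))]"
  by (simp add: cluster_walk_def)

lemma set_tl_cluster_walk_snoc:
  "set (tl (cluster_walk f (ys @ [y]))) = insert (f (insert y (set ys))) (set (tl (cluster_walk f ys)))"
  using cluster_walk_not_Nil[of f ys] by (auto simp: cluster_walk_snoc tl_append neq_Nil_conv)

lemma last_cluster_walk: "last (cluster_walk f ys) = f (set ys)"
  by (simp add: cluster_walk_def)

lemma cluster_walk_eq_Cons:
  "cluster_walk f ys = f {} # map (\<lambda>j. f (set (take j ys))) [1..<Suc (length ys)]"
  by (simp add: cluster_walk_def upt_conv_Cons del: upt_Suc)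

lemma cluster_walk_last_in_tl: "ys \<noteq> [] \<Longrightarrow> f (set ys) \<in> set (tl (cluster_walk f ys))"
  by (cases ys rule: rev_cases) (simp_all add: cluster_walk_snoc cluster_walk_eq_Cons)

lemma finite_Ax: "Y \<in> Ax n u v I x \<Longrightarrow> finite Y"
proof -
  have "finite (Sn n)" unfolding Sn_def by (simp add: finite_permutations)
  moreover assume "Y \<in> Ax n u v I x"
  then have "Y \<subseteq> Sn n" by (auto simp: Ax_def Yx_def bint_def dest: bruhat_le_Sn)
  ultimately show ?thesis by (rule finite_subset[rotated])
qed

lemma Ax_subset: "Y \<in> Ax n u v I x \<Longrightarrow> Y' \<subseteq> Y \<Longrightarrow> Y' \<in> Ax n u v I x"
  unfolding Ax_def bantichain_def by blast

lemma reflection_order_trans: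
  "reflection_order n prec \<Longrightarrow> r \<in> Trans n \<Longrightarrow> s \<in> Trans n \<Longrightarrow> t \<in> Trans n \<Longrightarrow>
    prec r s \<Longrightarrow> prec s t \<Longrightarrow> prec r t"
  unfolding reflection_order_def by blast

lemma sorted_wrt_snoc_larger:
  assumes "reflection_order n prec" "set ls \<subseteq> Trans n" "l \<in> Trans n" "t \<in> Trans n"
    and "sorted_wrt prec (ls @ [l])" "prec l t"
  shows "sorted_wrt prec (ls @ [t])"
  using assms reflection_order_trans[OF assms(1) _ assms(3,4)] by (auto simp: sorted_wrt_append)

locale hc_decomp_with_order =
  fixes n :: nat and u v :: "nat \<Rightarrow> nat" and I :: "(nat \<Rightarrow> nat) set"
    and \<theta> :: "(nat \<Rightarrow> nat) \<Rightarrow> (nat \<Rightarrow> nat) set \<Rightarrow> (nat \<Rightarrow> nat)"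
    and prec :: "nat \<times> nat \<Rightarrow> nat \<times> nat \<Rightarrow> bool"
  assumes decomp: "strong_hc_decomp n u v I \<theta>"
    and refl_order: "reflection_order n prec"
    and E1_prec: "E1 n u v I prec"
begin

lemma cluster: "x \<in> I \<Longrightarrow> strong_hc_cluster n u v I x (\<theta> x)"
  using decomp unfolding strong_hc_decomp_def by blast

lemma theta_empty: "x \<in> I \<Longrightarrow> \<theta> x {} = x"
  using cluster unfolding strong_hc_cluster_def by blast

lemma theta_singleton: "x \<in> I \<Longrightarrow> {y} \<in> Ax n u v I x \<Longrightarrow> \<theta> x {y} = y"
  using cluster unfolding strong_hc_cluster_def by blast

lemma theta_in_bint: "x \<in> I \<Longrightarrow> Y \<in> Ax n u v I x \<Longrightarrow> \<theta> x Y \<in> bint n u v"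
  using cluster unfolding strong_hc_cluster_def by blast

lemma barrow_theta_insert:
  assumes "x \<in> I" "insert y Y \<in> Ax n u v I x" "y \<notin> Y"
  shows "barrow n (\<theta> x Y) (\<theta> x (insert y Y))"
proof -
  have "Y \<in> Ax n u v I x" using Ax_subset assms(2) by blast
  moreover have "insert y Y - Y = {y}" using assms(3) by auto
  then have "acover Y (insert y Y)" by (auto simp: acover_def)
  ultimately show ?thesis using cluster[OF assms(1)] assms(2) unfolding strong_hc_cluster_def by blast
qed

lemma I_down_closed: "a \<in> bint n u v \<Longrightarrow> barrow n a b \<Longrightarrow> b \<in> I \<Longrightarrow> a \<in> I"
  using decomp unfolding strong_hc_decomp_def bint_def
  by (auto intro: bruhat_le_trans bruhat_le_if_barrow)

lemma theta_diamond:
  assumes x: "x \<in> I" and A: "insert y Y \<in> Ax n u v I x" "insert y' Y \<in> Ax n u v I x"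
    and "y \<notin> Y" "y' \<notin> Y" and ne: "\<theta> x (insert y Y) \<noteq> \<theta> x (insert y' Y)"
    and "barrow n (\<theta> x (insert y Y)) w" "barrow n (\<theta> x (insert y' Y)) w" "w \<in> bint n u v"
  shows "insert y' (insert y Y) \<in> Ax n u v I x \<and> \<theta> x (insert y' (insert y Y)) = w"
proof -
  have "y \<noteq> y'" using ne by blast
  have fin: "finite Y" using finite_Ax[OF A(1)] by simp
  have "Y \<in> Ax n u v I x" using Ax_subset A(1) by blast
  then have "diamond_in n u v (\<theta> x Y) (\<theta> x (insert y Y)) (\<theta> x (insert y' Y)) w"
    using assms barrow_theta_insert theta_in_bint by (intro diamond_inI) auto
  moreover have "card (insert y Y) = card (insert y' Y)" "card (insert y Y) = card Y + 1"
    using fin assms(4,5) by simp_all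
  moreover have "insert y Y \<inter> insert y' Y = Y" "insert y Y \<union> insert y' Y = insert y' (insert y Y)"
    using \<open>y \<noteq> y'\<close> assms(4,5) by auto
  ultimately have "bantichain n (insert y' (insert y Y)) \<and> \<theta> x (insert y' (insert y Y)) = w"
    using cluster[OF x] A unfolding strong_hc_cluster_def by metis
  moreover have "insert y' (insert y Y) \<subseteq> Yx n u v I x" using A by (auto simp: Ax_def)
  ultimately show ?thesis by (simp add: Ax_def)
qed

lemma lower_end_in_I: "u \<in> I"
  using decomp unfolding strong_hc_decomp_def bint_def
  by (auto intro: bruhat_le_refl dest: bruhat_le_Sn)

lemma exchange_outside_I:
  assumes x: "x \<in> I" and p: "p = x \<or> p \<notin> I" "p \<in> bint n u v"
    and e_l: "bedge n p l q" and q: "q \<in> bint n u v - I"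
    and e_t: "bedge n q t z" and z: "z \<in> bint n u v" and "prec l t"
  obtains t' z' where "bedge n p t' z'" "barrow n z' z" "z' \<noteq> q" "prec l t'" "z' \<in> bint n u v - I"
proof -
  obtain t' z' where e': "bedge n p t' z'" and z'z: "barrow n z' z" and "z' \<noteq> q" and "prec l t'"
    using bedge_exchange[OF refl_order e_l e_t \<open>prec l t\<close>] by blast
  have "bruhat_le n p z'" "bruhat_le n z' z"
    using e' z'z by (simp_all add: bruhat_le_if_barrow barrowI)
  then have "z' \<in> bint n u v"
    using p(2) z unfolding bint_def by (metis (mono_tags) bruhat_le_trans mem_Collect_eq)
  moreover have "z' \<notin> I"
  proof
    assume "z' \<in> I"
    then have "p = x" using I_down_closed[OF p(2) barrowI[OF e']] p(1) by blast
    then have "prec t' l"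
      using E1_prec x e_l e' q \<open>z' \<in> I\<close> unfolding E1_def by blast
    moreover have "l \<in> Trans n" "t' \<in> Trans n" using e_l e' unfolding bedge_def by blast+
    ultimately show False using reflection_order_asym[OF refl_order] \<open>prec l t'\<close> by blast
  qed
  ultimately show ?thesis using that[OF e' z'z \<open>z' \<noteq> q\<close> \<open>prec l t'\<close>] by blast
qed

lemma cluster_walk_extend:
  assumes x: "x \<in> I"
  shows "distinct ys \<Longrightarrow> set ys \<in> Ax n u v I x \<Longrightarrow>
    labelled_path n (cluster_walk (\<theta> x) ys) ls \<Longrightarrow> sorted_wrt prec (ls @ [t]) \<Longrightarrow>
    set (tl (cluster_walk (\<theta> x) ys)) \<inter> I = {} \<Longrightarrow>
    bedge n (\<theta> x (set ys)) t z \<Longrightarrow> z \<in> bint n u v - I \<Longrightarrow>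
    \<exists>y. y \<notin> set ys \<and> insert y (set ys) \<in> Ax n u v I x \<and> \<theta> x (insert y (set ys)) = z"
proof (induction ys arbitrary: ls t z rule: rev_induct)
  case Nil
  then have "{z} \<in> Ax n u v I x"
    by (auto simp: Ax_def Yx_def bantichain_def theta_empty[OF x] intro: barrowI)
  then show ?case using theta_singleton[OF x] by auto
next
  case (snoc y ys)
  define Y where "Y = set ys"
  have "insert y Y \<in> Ax n u v I x" using snoc.prems(2) by (simp add: Y_def)
  then have AY: "Y \<in> Ax n u v I x" "insert y Y \<in> Ax n u v I x" "y \<notin> Y"
    using Ax_subset[OF _ subset_insertI] snoc.prems(1) by (auto simp: Y_def)
  have walk: "cluster_walk (\<theta> x) (ys @ [y]) = cluster_walk (\<theta> x) ys @ [\<theta> x (insert y Y)]"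
    by (simp add: cluster_walk_snoc Y_def)
  obtain ls0 l where ls: "ls = ls0 @ [l]" and path0: "labelled_path n (cluster_walk (\<theta> x) ys) ls0"
    and e_l: "bedge n (\<theta> x Y) l (\<theta> x (insert y Y))"
    using snoc.prems(3) labelled_path_snoc_iff[OF cluster_walk_not_Nil]
    unfolding walk last_cluster_walk Y_def by blast
  have e_t: "bedge n (\<theta> x (insert y Y)) t z" using snoc.prems(6) by (simp add: Y_def)
  have outside: "set (tl (cluster_walk (\<theta> x) ys)) \<inter> I = {}" "\<theta> x (insert y Y) \<notin> I"
    using snoc.prems(5) by (auto simp: set_tl_cluster_walk_snoc Y_def)
  have "\<theta> x Y = x \<or> \<theta> x Y \<notin> I"
    using outside(1) cluster_walk_last_in_tl[of ys "\<theta> x"] theta_empty[OF x]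
    by (cases "ys = []") (auto simp: Y_def)
  moreover have "\<theta> x (insert y Y) \<in> bint n u v - I"
    using theta_in_bint[OF x AY(2)] outside(2) by simp
  moreover have "prec l t" "sorted_wrt prec (ls0 @ [l])"
    using snoc.prems(4) by (simp_all add: ls sorted_wrt_append)
  ultimately obtain t3 z' where e3: "bedge n (\<theta> x Y) t3 z'" and "barrow n z' z"
    and ne: "z' \<noteq> \<theta> x (insert y Y)" and "prec l t3" and z': "z' \<in> bint n u v - I"
    using exchange_outside_I[OF x _ theta_in_bint[OF x AY(1)] e_l _ e_t] snoc.prems(7) by blast
  have "l \<in> Trans n" "t3 \<in> Trans n" using e_l e3 unfolding bedge_def by blast+
  then have "sorted_wrt prec (ls0 @ [t3])"
    using sorted_wrt_snoc_larger[OF refl_order labelled_path_labels_Trans[OF path0]]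
      \<open>sorted_wrt prec (ls0 @ [l])\<close> \<open>prec l t3\<close> by blast
  then obtain y' where y': "y' \<notin> Y" "insert y' Y \<in> Ax n u v I x" "\<theta> x (insert y' Y) = z'"
    using snoc.IH[OF _ AY(1)[unfolded Y_def] path0 _ outside(1) e3[unfolded Y_def] z'] snoc.prems(1)
    by (auto simp: Y_def)
  have "insert y' (insert y Y) \<in> Ax n u v I x \<and> \<theta> x (insert y' (insert y Y)) = z"
    using theta_diamond[OF x AY(2) y'(2) AY(3) y'(1)] ne y'(3) e_t \<open>barrow n z' z\<close> snoc.prems(7)
    by (auto intro: barrowI)
  moreover have "y' \<noteq> y" using ne y'(3) by blast
  ultimately show ?case using y'(1) by (auto simp: Y_def)
qed

lemma labelled_path_ends_in_cluster_walk:
  "labelled_path n ps ls \<Longrightarrow> sorted_wrt prec ls \<Longrightarrow> hd ps \<in> I \<Longrightarrow> set ps \<subseteq> bint n u v \<Longrightarrow>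
    \<exists>pre x ys. x \<in> I \<and> distinct ys \<and> set ys \<in> Ax n u v I x \<and>
      set (tl (cluster_walk (\<theta> x) ys)) \<inter> I = {} \<and> ps = pre @ cluster_walk (\<theta> x) ys"
proof (induction ps arbitrary: ls rule: rev_induct)
  case Nil
  then show ?case by (simp add: labelled_path_def)
next
  case (snoc z ps)
  have stop: ?case if "z \<in> I"
  proof -
    have "{} \<in> Ax n u v I z" by (simp add: Ax_def bantichain_def)
    then show ?thesis using that by (intro exI[of _ ps] exI[of _ z] exI[of _ "[]"])
      (simp add: cluster_walk_Nil theta_empty)
  qed
  show ?case
  proof (cases "ps = [] \<or> z \<in> I")
    case True
    then show ?thesis using stop snoc.prems(3) by auto
  next
    case False
    then obtain ls0 t where ls: "ls = ls0 @ [t]" and path: "labelled_path n ps ls0"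
      and e: "bedge n (last ps) t z"
      using snoc.prems(1) labelled_path_snoc_iff by blast
    obtain pre x ys where x: "x \<in> I" and ys: "distinct ys" "set ys \<in> Ax n u v I x"
      and outside: "set (tl (cluster_walk (\<theta> x) ys)) \<inter> I = {}"
      and ps: "ps = pre @ cluster_walk (\<theta> x) ys"
      using snoc.IH[OF path] snoc.prems(2-4) False by (auto simp: ls sorted_wrt_append)
    have "labelled_path n (cluster_walk (\<theta> x) ys) (drop (length pre) ls0)"
      using labelled_path_drop path unfolding ps by (simp add: cluster_walk_def)
    moreover have "sorted_wrt prec (drop (length pre) ls0 @ [t])"
      using snoc.prems(2) sorted_wrt_drop[of prec ls "length pre"] path
      by (simp add: ls ps labelled_path_def cluster_walk_def)
    moreover have "bedge n (\<theta> x (set ys)) t z" using e by (simp add: ps last_cluster_walk cluster_walk_not_Nil)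
    moreover have "z \<in> bint n u v - I" using snoc.prems(4) False by simp
    ultimately obtain y where y: "y \<notin> set ys" "insert y (set ys) \<in> Ax n u v I x"
      "\<theta> x (insert y (set ys)) = z"
      using cluster_walk_extend[OF x ys _ _ outside] by blast
    show ?thesis
    proof (intro exI conjI)
      show "distinct (ys @ [y])" "set (ys @ [y]) \<in> Ax n u v I x" using ys y by simp_all
      show "set (tl (cluster_walk (\<theta> x) (ys @ [y]))) \<inter> I = {}"
        using outside y(3) False by (simp add: set_tl_cluster_walk_snoc)
      show "ps @ [z] = pre @ cluster_walk (\<theta> x) (ys @ [y])"
        using y(3) by (simp add: ps cluster_walk_snoc)
    qed (rule x)
  qed
qed

end

theorem lemma3p14:
  fixes n :: nat and u v :: "nat \<Rightarrow> nat" and I :: "(nat \<Rightarrow> nat) set"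
    and \<theta> :: "(nat \<Rightarrow> nat) \<Rightarrow> (nat \<Rightarrow> nat) set \<Rightarrow> (nat \<Rightarrow> nat)"
    and prec :: "nat \<times> nat \<Rightarrow> nat \<times> nat \<Rightarrow> bool"
    and xs :: "(nat \<Rightarrow> nat) list" and ts :: "(nat \<times> nat) list"
  assumes "bruhat_le n u v"
    and "strong_hc_decomp n u v I \<theta>"
    and "reflection_order n prec"
    and "E1 n u v I prec"
    and "increasing_path n prec u v xs ts"
  shows "\<exists>x \<in> I. \<exists>ys. distinct ys \<and> set ys \<in> Ax n u v I x \<and>
           (\<exists>pre. xs = pre @ x # map (\<lambda>j. \<theta> x (set (take j ys))) [1..<Suc (length ys)])"
proof -
  interpret hc_decomp_with_order n u v I \<theta> prec
    using assms(2-4) by unfold_locales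
  have path: "labelled_path n xs ts" "sorted_wrt prec ts" "hd xs = u" "last xs = v"
    using assms(5) by (simp_all add: increasing_path_iff)
  then have "set xs \<subseteq> bint n u v"
    using labelled_path_subset_bint bruhat_le_Sn[OF assms(1)] by metis
  then obtain pre x ys where "x \<in> I" "distinct ys" "set ys \<in> Ax n u v I x"
    and "xs = pre @ cluster_walk (\<theta> x) ys"
    using labelled_path_ends_in_cluster_walk path lower_end_in_I by metis
  then show ?thesis by (auto simp: cluster_walk_eq_Cons theta_empty)
qed

end
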